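(* Let $X,E\in\mathbb{R}^{n\times d}$ and $\bar X=X+E$, and assume $\|X\|_{2,\infty}\le1$ and $\|\bar X\|_{2,\infty}\le1$. Let $V,W\in\mathbb{R}^{d\times d}$ with $\|V\|\le1$ and $\|W\|\le\Gamma$. Define $A=\mathrm{softmax}(XWX^\top)XV$ and $\bar A=\mathrm{softmax}(\bar XW\bar X^\top)\bar XV$, with softmax applied row-wise. Then $$\|A\|_{2,\infty}\le1,\quad\|\bar A\|_{2,\infty}\le1,\quad \|A-\bar A\|_{2,1}\le(2\Gamma+1)e^{2\Gamma}\|E\|_{2,1}.$$
   Context: For a matrix $Z$, $\|Z\|_{2,p}$ denotes the $\ell_p$ norm of the vector of Euclidean norms of its rows. $\|\cdot\|$ on matrices is the spectral norm. *)

theory Defs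
  imports "HOL-Analysis.Analysis"
begin

definition norm_2inf :: "real^'d^'n \<Rightarrow> real" where
  "norm_2inf Z = Max (range (\<lambda>i. norm (Z $ i)))"

definition norm_21 :: "real^'d^'n \<Rightarrow> real" where
  "norm_21 Z = (\<Sum>i\<in>UNIV. norm (Z $ i))"

definition spec_norm :: "real^'d^'m \<Rightarrow> real" where
  "spec_norm M = onorm (\<lambda>x. M *v x)"

definition softmax :: "real^'k^'n \<Rightarrow> real^'k^'n" where
  "softmax M = (\<chi> i j. exp (M $ i $ j) / (\<Sum>k\<in>UNIV. exp (M $ i $ k)))"

end

theory Submission
  imports Defs
begin

(* Move X to X + E along the segment X + tE and pair the output rows with unit vectors w_i
   pointing along the final row differences.  By the mean value theorem the (2,1) distance is
   the derivative of this pairing at an intermediate point, whose rows still have norm at most 1.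
   The derivative splits into a transport term, a term from the perturbed keys and a term from
   the perturbed queries.  All scores lie in [-\<Gamma>, \<Gamma>], so every attention weight is at most
   e^(2\<Gamma>)/n, and the query term is a weighted covariance bounded by \<Gamma> |e_i| e^(2\<Gamma>) (1 - |c|^2),
   c being the centroid of the rows.  Collecting the coefficient of |e_j| it remains to show
   (1 + 2\<Gamma>) \<Sum>_i P_ij + \<Gamma> e^(2\<Gamma>) (1 - |c|^2) \<le> (1 + 2\<Gamma>) e^(2\<Gamma>): Jensen's inequality bounds P_ij by
   exp <x_i, W (x_j - c)> / n, convexity of exp bounds the resulting column sum by a chord
   depending on |c|, and an elementary inequality in two variables finishes. *)

lemma spec_norm_nonneg: "0 \<le> spec_norm (M::real^'d^'m)"
  unfolding spec_norm_def by (rule onorm_pos_le) simp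

lemma norm_matrix_vector_mult_le:
  fixes M :: "real^'d^'m"
  assumes "spec_norm M \<le> G"
  shows "norm (M *v x) \<le> G * norm x"
proof -
  have "norm (M *v x) \<le> spec_norm M * norm x"
    unfolding spec_norm_def using onorm[of "\<lambda>x. M *v x"] by simp
  also have "\<dots> \<le> G * norm x"
    using assms by (simp add: mult_right_mono)
  finally show ?thesis .
qed

lemma norm_vector_matrix_mult_le:
  fixes M :: "real^'d^'m"
  assumes "spec_norm M \<le> G"
  shows "norm (v v* M) \<le> G * norm v"
proof (cases "v v* M = 0")
  case True
  then show ?thesis
    using spec_norm_nonneg[of M] assms by simp
next
  case False
  have "norm (v v* M) * norm (v v* M) = inner (v v* M) (v v* M)"
    by (simp only: flip: power2_norm_eq_inner power2_eq_square)
  also have "\<dots> = inner v (M *v (v v* M))"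
    by (rule dot_lmul_matrix)
  also have "\<dots> \<le> norm v * (G * norm (v v* M))"
    using norm_cauchy_schwarz norm_matrix_vector_mult_le[OF assms]
    by (metis mult_left_mono norm_ge_zero order_trans)
  finally show ?thesis
    using False by (simp add: mult.commute mult.left_commute)
qed

lemma abs_inner_matrix_vector_le:
  fixes W :: "real^'d^'m"
  assumes "spec_norm W \<le> G"
  shows "\<bar>inner a (W *v b)\<bar> \<le> G * norm a * norm b"
proof -
  have "\<bar>inner a (W *v b)\<bar> \<le> norm a * norm (W *v b)"
    by (rule Cauchy_Schwarz_ineq2)
  also have "\<dots> \<le> norm a * (G * norm b)"
    by (intro mult_left_mono norm_matrix_vector_mult_le[OF assms]) simp
  finally show ?thesis
    by (simp add: mult.commute mult.left_commute)
qed

lemma matrix_mult_row: "(M ** N) $ i = M $ i v* (N::'a::comm_semiring_1^'p^'n)"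
  by (simp add: matrix_matrix_mult_def vector_matrix_mult_def vec_eq_iff mult.commute)

lemma matrix_mult_row_eq_sum: "(M ** N) $ i = (\<Sum>j\<in>UNIV. M $ i $ j *\<^sub>R N $ j)"
  for M :: "real^'n^'m" and N :: "real^'p^'n"
  by (simp add: matrix_matrix_mult_def vec_eq_iff sum_component)

lemma matrix_diff_rdistrib: "(A - B) ** C = A ** C - B ** (C::'a::ring_1^'p^'n)"
  by (simp add: matrix_matrix_mult_def vec_eq_iff algebra_simps sum_subtractf)

lemma matrix_mult_transpose_entry:
  fixes X Y :: "real^'d^'n" and W :: "real^'d^'d"
  shows "(X ** W ** transpose Y) $ i $ j = inner (X $ i) (W *v Y $ j)"
  by (simp add: matrix_matrix_mult_def matrix_vector_mult_def inner_vec_def transpose_def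
      sum_distrib_left sum_distrib_right mult.assoc) (rule sum.swap)

lemma norm_2inf_le_iff: "norm_2inf (Z::real^'d^'n) \<le> c \<longleftrightarrow> (\<forall>i. norm (Z $ i) \<le> c)"
  unfolding norm_2inf_def by (subst Max_le_iff) auto

lemma norm_21_matrix_mult_le:
  fixes N :: "real^'e^'d"
  assumes "spec_norm N \<le> G"
  shows "norm_21 (M ** N) \<le> G * norm_21 M"
  unfolding norm_21_def sum_distrib_left matrix_mult_row
  by (intro sum_mono norm_vector_matrix_mult_le[OF assms])

definition softmax_weight :: "('i::finite \<Rightarrow> real) \<Rightarrow> 'i \<Rightarrow> real" where
  "softmax_weight s j = exp (s j) / (\<Sum>k\<in>UNIV. exp (s k))"

lemma softmax_weight_nonneg: "0 \<le> softmax_weight s j"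
  unfolding softmax_weight_def by (intro divide_nonneg_pos sum_pos) auto

lemma sum_softmax_weight: "(\<Sum>j\<in>UNIV. softmax_weight s j) = 1"
proof -
  have "(\<Sum>k\<in>UNIV. exp (s k)) > 0"
    by (intro sum_pos) auto
  then show ?thesis
    unfolding softmax_weight_def by (simp flip: sum_divide_distrib)
qed

lemma card_mult_exp_mean_le_sum_exp:
  fixes s :: "'i::finite \<Rightarrow> real"
  shows "CARD('i) * exp ((\<Sum>k\<in>UNIV. s k) / CARD('i)) \<le> (\<Sum>k\<in>UNIV. exp (s k))"
proof -
  define \<mu> where "\<mu> = (\<Sum>k\<in>UNIV. s k) / CARD('i)"
  have "exp \<mu> * (1 + (s k - \<mu>)) \<le> exp (s k)" for k
    using exp_ge_add_one_self[of "s k - \<mu>"] by (simp add: exp_diff field_simps)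
  then have "(\<Sum>k\<in>UNIV. exp \<mu> * (1 + (s k - \<mu>))) \<le> (\<Sum>k\<in>UNIV. exp (s k))"
    by (intro sum_mono)
  moreover have "(\<Sum>k\<in>UNIV. exp \<mu> * (1 + (s k - \<mu>))) = CARD('i) * exp \<mu>"
    unfolding \<mu>_def by (simp add: sum.distrib sum_subtractf flip: sum_distrib_left)
  ultimately show ?thesis
    unfolding \<mu>_def by simp
qed

lemma softmax_weight_le_exp_centered:
  fixes s :: "'i::finite \<Rightarrow> real"
  shows "softmax_weight s j \<le> exp (s j - (\<Sum>k\<in>UNIV. s k) / CARD('i)) / CARD('i)"
proof -
  have "softmax_weight s j \<le> exp (s j) / (CARD('i) * exp ((\<Sum>k\<in>UNIV. s k) / CARD('i)))"
    unfolding softmax_weight_def using card_mult_exp_mean_le_sum_exp[of s]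
    by (intro divide_left_mono mult_pos_pos sum_pos) auto
  then show ?thesis
    by (simp add: exp_diff mult.commute)
qed

lemma softmax_weight_le:
  fixes s :: "'i::finite \<Rightarrow> real"
  assumes "\<And>k. \<bar>s k\<bar> \<le> G"
  shows "softmax_weight s j \<le> exp (2 * G) / CARD('i)"
proof -
  have "(\<Sum>k\<in>(UNIV::'i set). - G) \<le> (\<Sum>k\<in>UNIV. s k)"
    using assms by (intro sum_mono) (meson abs_le_iff minus_le_iff)
  then have "- G \<le> (\<Sum>k\<in>UNIV. s k) / CARD('i)"
    by (simp add: field_simps)
  then have "s j - (\<Sum>k\<in>UNIV. s k) / CARD('i) \<le> 2 * G"
    using assms[of j] by (simp add: abs_le_iff)
  then show ?thesis
    using softmax_weight_le_exp_centered[of s j] by (simp add: divide_right_mono order_trans)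
qed

lemma has_real_derivative_softmax_weighted_sum:
  fixes f y :: "'i::finite \<Rightarrow> real \<Rightarrow> real" and f' y' :: "'i \<Rightarrow> real"
  assumes df: "\<And>j. (f j has_real_derivative f' j) (at t)"
    and dy: "\<And>j. (y j has_real_derivative y' j) (at t)"
  defines "p \<equiv> softmax_weight (\<lambda>k. f k t)"
  shows "((\<lambda>s. \<Sum>j\<in>UNIV. softmax_weight (\<lambda>k. f k s) j * y j s) has_real_derivative
     (\<Sum>j\<in>UNIV. p j * y' j + p j * (f' j - (\<Sum>k\<in>UNIV. p k * f' k)) * y j t)) (at t)"
proof -
  define Z where "Z = (\<Sum>k\<in>UNIV. exp (f k t))"
  have Z: "Z > 0"
    unfolding Z_def by (intro sum_pos) auto
  have quotient: "(\<lambda>s. \<Sum>j\<in>UNIV. softmax_weight (\<lambda>k. f k s) j * y j s)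
      = (\<lambda>s. (\<Sum>j\<in>UNIV. exp (f j s) * y j s) / (\<Sum>k\<in>UNIV. exp (f k s)))"
    by (simp add: softmax_weight_def sum_divide_distrib)
  have numerator: "((\<lambda>s. \<Sum>j\<in>UNIV. exp (f j s) * y j s) has_real_derivative
      (\<Sum>j\<in>UNIV. exp (f j t) * f' j * y j t + y' j * exp (f j t))) (at t)"
    by (intro DERIV_sum DERIV_mult DERIV_chain2[OF DERIV_exp] df dy)
  have denominator: "((\<lambda>s. \<Sum>k\<in>UNIV. exp (f k s)) has_real_derivative
      (\<Sum>k\<in>UNIV. exp (f k t) * f' k)) (at t)"
    by (intro DERIV_sum DERIV_chain2[OF DERIV_exp] df)
  have "((\<Sum>j\<in>UNIV. exp (f j t) * f' j * y j t + y' j * exp (f j t)) * Z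
       - (\<Sum>j\<in>UNIV. exp (f j t) * y j t) * (\<Sum>k\<in>UNIV. exp (f k t) * f' k)) / (Z * Z)
     = (\<Sum>j\<in>UNIV. p j * y' j + p j * (f' j - (\<Sum>k\<in>UNIV. p k * f' k)) * y j t)"
  proof -
    have "(\<Sum>k\<in>UNIV. p k * f' k) = (\<Sum>k\<in>UNIV. exp (f k t) * f' k) / Z"
      by (simp add: p_def softmax_weight_def Z_def sum_divide_distrib)
    then show ?thesis
      using Z unfolding p_def softmax_weight_def Z_def[symmetric]
      by (simp add: field_simps sum_distrib_left sum_distrib_right sum.distrib sum_subtractf
          power2_eq_square flip: sum_divide_distrib)
  qed
  then show ?thesis
    using DERIV_divide[OF numerator denominator] Z unfolding quotient Z_def by simp
qed

definition attention :: "real^'d^'d \<Rightarrow> ('n::finite \<Rightarrow> real^'d) \<Rightarrow> 'n \<Rightarrow> 'n \<Rightarrow> real" where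
  "attention W x i = softmax_weight (\<lambda>j. inner (x i) (W *v x j))"

definition self_attention :: "real^'d^'d \<Rightarrow> real^'d^'n \<Rightarrow> real^'d^'n" where
  "self_attention W M = softmax (M ** W ** transpose M) ** M"

lemma self_attention_row:
  "self_attention W M $ i = (\<Sum>j\<in>UNIV. attention W (vec_nth M) i j *\<^sub>R M $ j)"
  unfolding self_attention_def softmax_def
  by (simp only: vec_lambda_beta matrix_mult_transpose_entry)
    (simp only: matrix_mult_row_eq_sum vec_lambda_beta attention_def softmax_weight_def)

lemma norm_self_attention_row_le:
  assumes "\<And>j. norm (M $ j) \<le> 1"
  shows "norm (self_attention W M $ i) \<le> 1"
proof -
  have "norm (self_attention W M $ i) \<le> (\<Sum>j\<in>UNIV. norm (attention W (vec_nth M) i j *\<^sub>R M $ j))"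
    unfolding self_attention_row by (rule norm_sum)
  also have "\<dots> \<le> (\<Sum>j\<in>UNIV. attention W (vec_nth M) i j)"
    using assms by (intro sum_mono) (simp add: attention_def softmax_weight_nonneg mult_left_le)
  finally show ?thesis
    by (simp add: attention_def sum_softmax_weight)
qed

lemma attention_le:
  fixes x :: "'n::finite \<Rightarrow> real^'d"
  assumes "\<And>j. norm (x j) \<le> 1" and "spec_norm W \<le> G"
  shows "attention W x i j \<le> exp (2 * G) / CARD('n)"
  unfolding attention_def
proof (rule softmax_weight_le)
  fix k
  have "\<bar>inner (x i) (W *v x k)\<bar> \<le> G * norm (x i) * norm (x k)"
    by (rule abs_inner_matrix_vector_le[OF assms(2)])
  also have "\<dots> \<le> G"
    using assms spec_norm_nonneg[of W] by (simp add: mult_le_one mult_left_le mult.assoc)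
  finally show "\<bar>inner (x i) (W *v x k)\<bar> \<le> G" .
qed

lemma exp_le_chord:
  fixes a s :: real
  assumes "\<bar>s\<bar> \<le> a"
  shows "2 * a * exp s \<le> (a + s) * exp a + (a - s) * exp (- a)"
proof (cases "a = 0")
  case True
  then show ?thesis
    using assms by simp
next
  case False
  then have a: "a > 0"
    using assms by linarith
  define \<theta> where "\<theta> = (a + s) / (2 * a)"
  have "0 \<le> \<theta>" "\<theta> \<le> 1"
    unfolding \<theta>_def using assms a by (auto simp: field_simps)
  moreover have "s = (1 - \<theta>) *\<^sub>R (- a) + \<theta> *\<^sub>R a"
    unfolding \<theta>_def using a by (simp add: field_simps)
  ultimately have "exp s \<le> (1 - \<theta>) * exp (- a) + \<theta> * exp a"
    using convex_onD[OF exp_convex] by (metis UNIV_I)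
  then have "2 * a * exp s \<le> 2 * a * ((1 - \<theta>) * exp (- a) + \<theta> * exp a)"
    using a by simp
  also have "\<dots> = (a + s) * exp a + (a - s) * exp (- a)"
    unfolding \<theta>_def using a by (simp add: field_simps)
  finally show ?thesis .
qed

lemma column_mass_ineq_rational:
  fixes u t :: real
  assumes u: "0 \<le> u" and t: "0 \<le> t" "t \<le> 1"
  shows "(1 + 2 * u) * ((2 - t) / (1 + u * t) + t / (1 + u * (4 - t))) / 2 + u * t * (2 - t)
    \<le> 1 + 2 * u"
proof -
  define D1 where "D1 = 1 + u * t"
  define D2 where "D2 = 1 + u * (4 - t)"
  have D: "D1 > 0" "D2 > 0"
    unfolding D1_def D2_def using u t by (simp_all add: add_pos_nonneg)
  have cubic: "0 \<le> 8 - 10 * t + 6 * t\<^sup>2 - t ^ 3"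
  proof -
    have "t ^ 3 \<le> t\<^sup>2"
      using t by (simp add: power3_eq_cube power2_eq_square mult_left_le)
    moreover have "0 \<le> 5 * (t - 1)\<^sup>2 + 3"
      by simp
    ultimately show ?thesis
      by (simp add: power2_eq_square algebra_simps)
  qed
  have "2 * (1 + 2 * u) * D1 * D2 - (1 + 2 * u) * ((2 - t) * D2 + t * D1) - 2 * u * t * (2 - t) * D1 * D2
      = 2 * u * t * (1 + u * (2 + t) + u\<^sup>2 * (8 - 10 * t + 6 * t\<^sup>2 - t ^ 3))"
    unfolding D1_def D2_def by (simp add: algebra_simps power2_eq_square power3_eq_cube)
  also have "\<dots> \<ge> 0"
    using u t cubic by (intro mult_nonneg_nonneg add_nonneg_nonneg) auto
  finally have "((1 + 2 * u) * ((2 - t) * D2 + t * D1) + 2 * u * t * (2 - t) * D1 * D2) / (2 * D1 * D2)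
      \<le> 1 + 2 * u"
    using D by (simp add: divide_le_eq algebra_simps)
  moreover have "((1 + 2 * u) * ((2 - t) * D2 + t * D1) + 2 * u * t * (2 - t) * D1 * D2) / (2 * D1 * D2)
      = (1 + 2 * u) * ((2 - t) / D1 + t / D2) / 2 + u * t * (2 - t)"
    using D by (simp add: field_simps)
  ultimately show ?thesis
    unfolding D1_def D2_def by simp
qed

(* The chord bound on a column sum, at |c| = m and chord radius a = u (1 + m), is absorbed by the
   covariance deficit u e^(2u) (1 - m^2).  Substituting t = 1 - m and exp (-y) \<le> 1 / (1 + y)
   reduces this to the rational inequality above. *)
lemma column_mass_ineq:
  fixes u m :: real
  assumes u: "0 \<le> u" and m: "0 \<le> m" "m \<le> 1"
  shows "(1 + 2 * u) * ((1 + m) * exp (u * (1 + m)) + (1 - m) * exp (- (u * (1 + m)))) / 2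
      + u * exp (2 * u) * (1 - m\<^sup>2) \<le> (1 + 2 * u) * exp (2 * u)"
proof -
  define t where "t = 1 - m"
  have t: "0 \<le> t" "t \<le> 1"
    using m unfolding t_def by auto
  have exp_minus_le: "exp (- y) \<le> 1 / (1 + y)" if "0 \<le> y" for y :: real
    using exp_ge_add_one_self[of y] that by (simp add: exp_minus divide_le_eq field_simps)
  have "(2 - t) * exp (- (u * t)) \<le> (2 - t) * (1 / (1 + u * t))"
    using exp_minus_le[of "u * t"] u t by (intro mult_left_mono) auto
  moreover have "t * exp (- (u * (4 - t))) \<le> t * (1 / (1 + u * (4 - t)))"
    using exp_minus_le[of "u * (4 - t)"] u t by (intro mult_left_mono) auto
  ultimately have "(1 + 2 * u) * ((2 - t) * exp (- (u * t)) + t * exp (- (u * (4 - t)))) / 2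
      + u * t * (2 - t)
      \<le> (1 + 2 * u) * ((2 - t) / (1 + u * t) + t / (1 + u * (4 - t))) / 2 + u * t * (2 - t)"
    using u by (intro add_right_mono divide_right_mono mult_left_mono) auto
  also have "\<dots> \<le> 1 + 2 * u"
    by (rule column_mass_ineq_rational[OF u t])
  finally have main: "(1 + 2 * u) * ((2 - t) * exp (- (u * t)) + t * exp (- (u * (4 - t)))) / 2
      + u * t * (2 - t) \<le> 1 + 2 * u" .
  have "exp (u * (1 + m)) = exp (2 * u) * exp (- (u * t))"
    and "exp (- (u * (1 + m))) = exp (2 * u) * exp (- (u * (4 - t)))"
    unfolding t_def by (simp_all add: algebra_simps flip: exp_add)
  moreover have "1 - m\<^sup>2 = t * (2 - t)"
    unfolding t_def by (simp add: power2_eq_square algebra_simps)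
  ultimately have "(1 + 2 * u) * ((1 + m) * exp (u * (1 + m)) + (1 - m) * exp (- (u * (1 + m)))) / 2
      + u * exp (2 * u) * (1 - m\<^sup>2)
    = exp (2 * u) * ((1 + 2 * u) * ((2 - t) * exp (- (u * t)) + t * exp (- (u * (4 - t)))) / 2
      + u * t * (2 - t))"
    by (simp add: t_def algebra_simps)
  also have "\<dots> \<le> exp (2 * u) * (1 + 2 * u)"
    using main by simp
  finally show ?thesis
    by (simp add: mult.commute)
qed

definition centroid :: "('i::finite \<Rightarrow> 'a::real_vector) \<Rightarrow> 'a" where
  "centroid x = (1 / CARD('i)) *\<^sub>R (\<Sum>k\<in>UNIV. x k)"

lemma norm_centroid_le:
  fixes x :: "'i::finite \<Rightarrow> 'a::real_normed_vector"
  assumes "\<And>j. norm (x j) \<le> 1"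
  shows "norm (centroid x) \<le> 1"
proof -
  have "norm (\<Sum>k\<in>UNIV. x k) \<le> (\<Sum>k\<in>(UNIV::'i set). 1)"
    using assms by (intro order_trans[OF norm_sum] sum_mono)
  then show ?thesis
    by (simp add: centroid_def divide_le_eq)
qed

lemma sum_inner_eq_centroid:
  fixes x :: "'i::finite \<Rightarrow> 'a::real_inner"
  shows "(\<Sum>i\<in>UNIV. inner (x i) g) = CARD('i) * inner (centroid x) g"
  by (simp add: centroid_def inner_sum_left)

lemma sum_norm_sq_diff_centroid_le:
  fixes x :: "'i::finite \<Rightarrow> 'a::real_inner"
  assumes "\<And>j. norm (x j) \<le> 1"
  shows "(\<Sum>j\<in>UNIV. (norm (x j - centroid x))\<^sup>2) \<le> CARD('i) * (1 - (norm (centroid x))\<^sup>2)"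
proof -
  have "(\<Sum>j\<in>UNIV. (norm (x j - centroid x))\<^sup>2)
      = (\<Sum>j\<in>UNIV. (norm (x j))\<^sup>2 - 2 * inner (x j) (centroid x) + (norm (centroid x))\<^sup>2)"
    by (intro sum.cong refl)
      (simp add: power2_norm_eq_inner inner_diff_left inner_diff_right inner_commute)
  also have "\<dots> = (\<Sum>j\<in>UNIV. (norm (x j))\<^sup>2) - CARD('i) * (norm (centroid x))\<^sup>2"
    by (simp add: sum.distrib sum_subtractf sum_inner_eq_centroid power2_norm_eq_inner
        flip: sum_distrib_left)
  also have "(\<Sum>j\<in>UNIV. (norm (x j))\<^sup>2) \<le> (\<Sum>j\<in>(UNIV::'i set). 1)"
    using assms by (intro sum_mono) (simp add: power_le_one)
  finally show ?thesis
    by (simp add: algebra_simps)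
qed

lemma sum_exp_inner_le:
  fixes x :: "'i::finite \<Rightarrow> 'a::real_inner"
  assumes x: "\<And>i. norm (x i) \<le> 1" and g: "norm g \<le> a"
  defines "m \<equiv> norm (centroid x)"
  shows "(\<Sum>i\<in>UNIV. exp (inner (x i) g))
    \<le> CARD('i) * ((1 + m) * exp a + (1 - m) * exp (- a)) / 2"
proof (cases "a = 0")
  case True
  then show ?thesis
    using g by simp
next
  case False
  then have a: "a > 0"
    using g norm_ge_zero[of g] by linarith
  have chord: "2 * a * exp (inner (x i) g)
      \<le> (a + inner (x i) g) * exp a + (a - inner (x i) g) * exp (- a)" for i
  proof (rule exp_le_chord)
    have "\<bar>inner (x i) g\<bar> \<le> norm (x i) * norm g"
      by (rule Cauchy_Schwarz_ineq2)
    also have "\<dots> \<le> 1 * a"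
      using x[of i] g by (intro mult_mono) auto
    finally show "\<bar>inner (x i) g\<bar> \<le> a"
      by simp
  qed
  have "inner (centroid x) g \<le> m * a"
    unfolding m_def using norm_cauchy_schwarz[of "centroid x" g] g
    by (meson mult_left_mono norm_ge_zero order_trans)
  moreover have "exp (- a) \<le> exp a"
    using a by simp
  ultimately have "CARD('i) * inner (centroid x) g * (exp a - exp (- a))
      \<le> CARD('i) * (m * a) * (exp a - exp (- a))"
    by (intro mult_right_mono mult_left_mono) auto
  moreover have "2 * a * (\<Sum>i\<in>UNIV. exp (inner (x i) g))
      \<le> (\<Sum>i\<in>UNIV. (a + inner (x i) g) * exp a + (a - inner (x i) g) * exp (- a))"
    unfolding sum_distrib_left by (intro sum_mono chord)
  moreover have "(\<Sum>i\<in>UNIV. (a + inner (x i) g) * exp a + (a - inner (x i) g) * exp (- a))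
      = (\<Sum>i\<in>UNIV. a * (exp a + exp (- a)) + inner (x i) g * (exp a - exp (- a)))"
    by (simp add: algebra_simps)
  moreover have "\<dots> = CARD('i) * a * (exp a + exp (- a))
      + CARD('i) * inner (centroid x) g * (exp a - exp (- a))"
    by (simp add: sum.distrib flip: sum_distrib_right sum_inner_eq_centroid)
  ultimately have "a * (2 * (\<Sum>i\<in>UNIV. exp (inner (x i) g)))
      \<le> a * (CARD('i) * ((1 + m) * exp a + (1 - m) * exp (- a)))"
    by (simp add: algebra_simps)
  then have "2 * (\<Sum>i\<in>UNIV. exp (inner (x i) g)) \<le> CARD('i) * ((1 + m) * exp a + (1 - m) * exp (- a))"
    using a by (simp only: mult_le_cancel_left_pos)
  then show ?thesis
    by simp
qed

lemma sum_weighted_centered_mult: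
  fixes p a b :: "'i::finite \<Rightarrow> real"
  assumes "(\<Sum>j\<in>UNIV. p j) = 1"
  shows "(\<Sum>j\<in>UNIV. p j * (a j - (\<Sum>k\<in>UNIV. p k * a k)) * b j)
    = (\<Sum>j\<in>UNIV. p j * a j * (b j - (\<Sum>k\<in>UNIV. p k * b k)))"
proof -
  define A B where "A = (\<Sum>k\<in>UNIV. p k * a k)" and "B = (\<Sum>k\<in>UNIV. p k * b k)"
  have "(\<Sum>j\<in>UNIV. p j * (a j - A) * b j) = (\<Sum>j\<in>UNIV. p j * a j * b j) - A * (\<Sum>j\<in>UNIV. p j * b j)"
    by (simp add: algebra_simps sum_subtractf sum_distrib_left)
  moreover have "(\<Sum>j\<in>UNIV. p j * a j * (b j - B)) = (\<Sum>j\<in>UNIV. p j * a j * b j) - B * (\<Sum>j\<in>UNIV. p j * a j)"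
    by (simp add: algebra_simps sum_subtractf sum_distrib_left)
  ultimately show ?thesis
    unfolding A_def B_def by simp
qed

lemma weighted_centered_mult_le:
  fixes p y b c :: "'i::finite \<Rightarrow> real"
  assumes p0: "\<And>j. 0 \<le> p j" and p1: "(\<Sum>j\<in>UNIV. p j) = 1"
    and y: "\<And>j. \<bar>y j\<bar> \<le> 1" and b: "\<And>j. \<bar>b j\<bar> \<le> c j"
  shows "(\<Sum>j\<in>UNIV. p j * b j * (y j - (\<Sum>k\<in>UNIV. p k * y k))) \<le> 2 * (\<Sum>j\<in>UNIV. p j * c j)"
proof -
  have "\<bar>\<Sum>k\<in>UNIV. p k * y k\<bar> \<le> (\<Sum>k\<in>UNIV. p k)"
    using p0 y by (intro order_trans[OF sum_abs] sum_mono) (simp add: abs_mult mult_left_le)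
  then have "\<bar>y j - (\<Sum>k\<in>UNIV. p k * y k)\<bar> \<le> 2" for j
    using y[of j] p1 by linarith
  then have "b j * (y j - (\<Sum>k\<in>UNIV. p k * y k)) \<le> c j * 2" for j
  proof -
    have "b j * (y j - (\<Sum>k\<in>UNIV. p k * y k)) \<le> \<bar>b j\<bar> * \<bar>y j - (\<Sum>k\<in>UNIV. p k * y k)\<bar>"
      by (metis abs_ge_self abs_mult)
    also have "\<dots> \<le> c j * 2"
      using b[of j] abs_ge_zero[of "b j"] \<open>\<bar>y j - (\<Sum>k\<in>UNIV. p k * y k)\<bar> \<le> 2\<close>
      by (intro mult_mono) auto
    finally show ?thesis .
  qed
  then have "p j * (b j * (y j - (\<Sum>k\<in>UNIV. p k * y k))) \<le> p j * (c j * 2)" for j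
    using p0 by (rule mult_left_mono)
  then show ?thesis
    by (simp add: sum_distrib_left sum_mono mult_ac)
qed

lemma sum_weighted_deviation_eq_0:
  fixes x :: "'i::finite \<Rightarrow> 'a::real_vector"
  assumes "(\<Sum>j\<in>UNIV. p j) = 1"
  shows "(\<Sum>j\<in>UNIV. p j *\<^sub>R (x j - (\<Sum>k\<in>UNIV. p k *\<^sub>R x k))) = 0"
  by (simp add: assms scaleR_diff_right sum_subtractf flip: scaleR_sum_left)

lemma weighted_sum_sq_dist_eq:
  fixes x :: "'i::finite \<Rightarrow> 'a::real_inner"
  assumes p: "(\<Sum>j\<in>UNIV. p j) = 1"
  defines "xh \<equiv> \<Sum>k\<in>UNIV. p k *\<^sub>R x k"
  shows "(\<Sum>j\<in>UNIV. p j * (norm (x j - c))\<^sup>2)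
    = (\<Sum>j\<in>UNIV. p j * (norm (x j - xh))\<^sup>2) + (norm (xh - c))\<^sup>2"
proof -
  have centered: "(\<Sum>j\<in>UNIV. p j *\<^sub>R (x j - xh)) = 0"
    unfolding xh_def using p by (rule sum_weighted_deviation_eq_0)
  have "(norm (x j - c))\<^sup>2
      = (norm (x j - xh))\<^sup>2 + 2 * inner (x j - xh) (xh - c) + (norm (xh - c))\<^sup>2" for j
  proof -
    have "x j - c = (x j - xh) + (xh - c)"
      by simp
    then show ?thesis
      by (simp only: power2_norm_eq_inner inner_add_left inner_add_right inner_commute)
  qed
  then have "(\<Sum>j\<in>UNIV. p j * (norm (x j - c))\<^sup>2)
      = (\<Sum>j\<in>UNIV. p j * (norm (x j - xh))\<^sup>2 + 2 * inner (p j *\<^sub>R (x j - xh)) (xh - c)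
          + p j * (norm (xh - c))\<^sup>2)"
    by (simp add: distrib_left mult.left_commute)
  also have "\<dots> = (\<Sum>j\<in>UNIV. p j * (norm (x j - xh))\<^sup>2)
      + 2 * inner (\<Sum>j\<in>UNIV. p j *\<^sub>R (x j - xh)) (xh - c) + (\<Sum>j\<in>UNIV. p j) * (norm (xh - c))\<^sup>2"
    by (simp only: sum.distrib inner_sum_left sum_distrib_left sum_distrib_right)
  finally show ?thesis
    using centered p by simp
qed

lemma weighted_covariance_le:
  fixes x :: "'i::finite \<Rightarrow> 'a::real_inner"
  assumes p0: "\<And>j. 0 \<le> p j" and p1: "(\<Sum>j\<in>UNIV. p j) = 1" and w: "norm w \<le> 1"
  shows "(\<Sum>j\<in>UNIV. p j * inner g (x j) * (inner (x j) w - (\<Sum>k\<in>UNIV. p k * inner (x k) w)))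
    \<le> norm g * (\<Sum>j\<in>UNIV. p j * (norm (x j - c))\<^sup>2)"
proof -
  define xh where "xh = (\<Sum>k\<in>UNIV. p k *\<^sub>R x k)"
  have centered: "(\<Sum>j\<in>UNIV. p j *\<^sub>R (x j - xh)) = 0"
    unfolding xh_def using p1 by (rule sum_weighted_deviation_eq_0)
  have "(\<Sum>k\<in>UNIV. p k * inner (x k) w) = inner xh w"
    by (simp add: xh_def inner_sum_left)
  then have "(\<Sum>j\<in>UNIV. p j * inner g (x j) * (inner (x j) w - (\<Sum>k\<in>UNIV. p k * inner (x k) w)))
      = (\<Sum>j\<in>UNIV. p j * (inner g (x j - xh) + inner g xh) * inner (x j - xh) w)"
    by (simp add: inner_diff_left inner_diff_right)
  also have "\<dots> = (\<Sum>j\<in>UNIV. p j * inner g (x j - xh) * inner (x j - xh) w)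
      + inner g xh * (\<Sum>j\<in>UNIV. p j * inner (x j - xh) w)"
    by (simp add: distrib_left distrib_right sum.distrib sum_distrib_left mult_ac)
  also have "(\<Sum>j\<in>UNIV. p j * inner (x j - xh) w) = inner (\<Sum>j\<in>UNIV. p j *\<^sub>R (x j - xh)) w"
    by (simp add: inner_sum_left)
  also have "\<dots> = 0"
    using centered by simp
  also have "(\<Sum>j\<in>UNIV. p j * inner g (x j - xh) * inner (x j - xh) w) + inner g xh * 0
      \<le> (\<Sum>j\<in>UNIV. p j * (norm g * (norm (x j - xh))\<^sup>2))"
  proof -
    have "inner g (x j - xh) * inner (x j - xh) w \<le> norm g * (norm (x j - xh))\<^sup>2" for j
    proof -
      have "inner g (x j - xh) * inner (x j - xh) w
          \<le> (norm g * norm (x j - xh)) * (norm (x j - xh) * norm w)"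
        by (rule order_trans[OF abs_ge_self]) (simp add: abs_mult mult_mono Cauchy_Schwarz_ineq2)
      also have "\<dots> \<le> norm g * (norm (x j - xh))\<^sup>2"
        using mult_right_le_one_le[OF _ norm_ge_zero w, of "norm g * (norm (x j - xh))\<^sup>2"]
        by (simp add: power2_eq_square mult_ac)
      finally show ?thesis .
    qed
    then show ?thesis
      by (simp add: sum_mono mult.assoc mult_left_mono p0)
  qed
  also have "\<dots> = norm g * (\<Sum>j\<in>UNIV. p j * (norm (x j - xh))\<^sup>2)"
    by (simp add: sum_distrib_left mult.left_commute)
  also have "\<dots> \<le> norm g * (\<Sum>j\<in>UNIV. p j * (norm (x j - c))\<^sup>2)"
    using weighted_sum_sq_dist_eq[OF p1, of x c] unfolding xh_def
    by (intro mult_left_mono) simp_all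
  finally show ?thesis .
qed

lemma attention_column_bound:
  fixes x :: "'n::finite \<Rightarrow> real^'d" and W :: "real^'d^'d"
  assumes x: "\<And>j. norm (x j) \<le> 1" and W: "spec_norm W \<le> G"
  defines "m \<equiv> norm (centroid x)"
  shows "(1 + 2 * G) * (\<Sum>i\<in>UNIV. attention W x i j) + G * exp (2 * G) * (1 - m\<^sup>2)
    \<le> (1 + 2 * G) * exp (2 * G)"
proof -
  have G: "0 \<le> G"
    using spec_norm_nonneg[of W] W by linarith
  have m: "0 \<le> m" "m \<le> 1"
    unfolding m_def using norm_centroid_le[OF x] by auto
  define g where "g = W *v (x j - centroid x)"
  have g: "norm g \<le> G * (1 + m)"
  proof -
    have "norm (x j - centroid x) \<le> 1 + m"
      unfolding m_def using x[of j] norm_triangle_ineq4[of "x j" "centroid x"] by linarith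
    then show ?thesis
      unfolding g_def using norm_matrix_vector_mult_le[OF W] G by (meson mult_left_mono order_trans)
  qed
  have entry: "attention W x i j \<le> exp (inner (x i) g) / CARD('n)" for i
  proof -
    have "(\<Sum>k\<in>UNIV. inner (x i) (W *v x k)) / CARD('n) = inner (x i) (W *v centroid x)"
      by (simp add: centroid_def inner_sum_right flip: dot_lmul_matrix)
    then show ?thesis
      using softmax_weight_le_exp_centered[of "\<lambda>k. inner (x i) (W *v x k)" j]
      by (simp add: attention_def g_def matrix_vector_mult_diff_distrib inner_diff_right)
  qed
  have "(\<Sum>i\<in>UNIV. attention W x i j) \<le> (\<Sum>i\<in>UNIV. exp (inner (x i) g)) / CARD('n)"
    unfolding sum_divide_distrib by (intro sum_mono entry)
  also have "\<dots> \<le> ((1 + m) * exp (G * (1 + m)) + (1 - m) * exp (- (G * (1 + m)))) / 2"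
    using sum_exp_inner_le[OF x g] by (simp add: m_def divide_le_eq mult.commute)
  finally have "(1 + 2 * G) * (\<Sum>i\<in>UNIV. attention W x i j)
      \<le> (1 + 2 * G) * ((1 + m) * exp (G * (1 + m)) + (1 - m) * exp (- (G * (1 + m)))) / 2"
    using G by (simp add: mult_left_mono)
  with column_mass_ineq[OF G m] show ?thesis
    by simp
qed

lemma attention_query_term_le:
  fixes x :: "'n::finite \<Rightarrow> real^'d" and W :: "real^'d^'d" and i :: 'n
  assumes x: "\<And>j. norm (x j) \<le> 1" and w: "norm w \<le> 1" and W: "spec_norm W \<le> G"
  defines "p \<equiv> attention W x i"
  shows "(\<Sum>j\<in>UNIV. p j * inner u (W *v x j) * (inner (x j) w - (\<Sum>k\<in>UNIV. p k * inner (x k) w)))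
    \<le> G * norm u * exp (2 * G) * (1 - (norm (centroid x))\<^sup>2)"
proof -
  have "(\<Sum>j\<in>UNIV. p j * (norm (x j - centroid x))\<^sup>2)
      \<le> (\<Sum>j\<in>UNIV. exp (2 * G) / CARD('n) * (norm (x j - centroid x))\<^sup>2)"
    unfolding p_def by (intro sum_mono mult_right_mono attention_le[OF x W]) simp
  also have "\<dots> \<le> exp (2 * G) / CARD('n) * (CARD('n) * (1 - (norm (centroid x))\<^sup>2))"
    unfolding sum_distrib_left[symmetric]
    by (intro mult_left_mono sum_norm_sq_diff_centroid_le x) simp
  finally have "(\<Sum>j\<in>UNIV. p j * (norm (x j - centroid x))\<^sup>2)
      \<le> exp (2 * G) * (1 - (norm (centroid x))\<^sup>2)"
    by simp
  moreover have "norm (u v* W) \<le> G * norm u"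
    by (rule norm_vector_matrix_mult_le[OF W])
  ultimately have "norm (u v* W) * (\<Sum>j\<in>UNIV. p j * (norm (x j - centroid x))\<^sup>2)
      \<le> G * norm u * (exp (2 * G) * (1 - (norm (centroid x))\<^sup>2))"
    using spec_norm_nonneg[of W] W
    by (intro mult_mono) (auto intro: sum_nonneg simp: p_def attention_def softmax_weight_nonneg)
  moreover have "(\<Sum>j\<in>UNIV. p j * inner (u v* W) (x j) * (inner (x j) w - (\<Sum>k\<in>UNIV. p k * inner (x k) w)))
      \<le> norm (u v* W) * (\<Sum>j\<in>UNIV. p j * (norm (x j - centroid x))\<^sup>2)"
    unfolding p_def attention_def
    by (rule weighted_covariance_le[OF softmax_weight_nonneg sum_softmax_weight w])
  ultimately show ?thesis
    by (simp add: dot_lmul_matrix mult.assoc)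
qed

definition score_deriv ::
    "real^'d^'d \<Rightarrow> ('n \<Rightarrow> real^'d) \<Rightarrow> ('n \<Rightarrow> real^'d) \<Rightarrow> 'n \<Rightarrow> 'n \<Rightarrow> real" where
  "score_deriv W x e i j = inner (e i) (W *v x j) + inner (x i) (W *v e j)"

lemma attention_row_deriv_le:
  fixes x e :: "'n::finite \<Rightarrow> real^'d" and W :: "real^'d^'d" and i :: 'n
  assumes x: "\<And>j. norm (x j) \<le> 1" and w: "norm w \<le> 1" and W: "spec_norm W \<le> G"
  defines "p \<equiv> attention W x i" and "\<sigma> \<equiv> score_deriv W x e i"
  shows "(\<Sum>j\<in>UNIV. p j * inner (e j) w + p j * (\<sigma> j - (\<Sum>k\<in>UNIV. p k * \<sigma> k)) * inner (x j) w)
    \<le> (1 + 2 * G) * (\<Sum>j\<in>UNIV. p j * norm (e j))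
      + G * exp (2 * G) * (1 - (norm (centroid x))\<^sup>2) * norm (e i)"
proof -
  define dy where "dy j = inner (x j) w - (\<Sum>k\<in>UNIV. p k * inner (x k) w)" for j
  have p0: "0 \<le> p j" for j
    unfolding p_def attention_def by (rule softmax_weight_nonneg)
  have p1: "(\<Sum>j\<in>UNIV. p j) = 1"
    unfolding p_def attention_def by (rule sum_softmax_weight)
  have transport: "(\<Sum>j\<in>UNIV. p j * inner (e j) w) \<le> (\<Sum>j\<in>UNIV. p j * norm (e j))"
    using p0 norm_cauchy_schwarz[of "e _" w] w
    by (intro sum_mono mult_left_mono) (meson mult_left_le norm_ge_zero order_trans)
  have keys: "(\<Sum>j\<in>UNIV. p j * inner (x i) (W *v e j) * dy j) \<le> 2 * (\<Sum>j\<in>UNIV. p j * (G * norm (e j)))"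
    unfolding dy_def
  proof (rule weighted_centered_mult_le[OF p0 p1])
    show "\<bar>inner (x j) w\<bar> \<le> 1" for j
      using Cauchy_Schwarz_ineq2[of "x j" w] x[of j] w by (meson mult_le_one norm_ge_zero order_trans)
    have "G * norm (x i) \<le> G"
      using mult_right_le_one_le[OF _ norm_ge_zero x[of i]] spec_norm_nonneg[of W] W by simp
    then show "\<bar>inner (x i) (W *v e j)\<bar> \<le> G * norm (e j)" for j
      using abs_inner_matrix_vector_le[OF W, of "x i" "e j"]
      by (meson mult_right_mono norm_ge_zero order_trans)
  qed
  have queries: "(\<Sum>j\<in>UNIV. p j * inner (e i) (W *v x j) * dy j)
      \<le> G * norm (e i) * exp (2 * G) * (1 - (norm (centroid x))\<^sup>2)"
    unfolding p_def dy_def by (rule attention_query_term_le[OF x w W])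
  have "(\<Sum>j\<in>UNIV. p j * (\<sigma> j - (\<Sum>k\<in>UNIV. p k * \<sigma> k)) * inner (x j) w)
      = (\<Sum>j\<in>UNIV. p j * \<sigma> j * dy j)"
    unfolding dy_def by (rule sum_weighted_centered_mult[OF p1])
  also have "\<dots> = (\<Sum>j\<in>UNIV. p j * inner (e i) (W *v x j) * dy j)
      + (\<Sum>j\<in>UNIV. p j * inner (x i) (W *v e j) * dy j)"
    by (simp add: \<sigma>_def score_deriv_def distrib_left distrib_right sum.distrib)
  finally have "(\<Sum>j\<in>UNIV. p j * (\<sigma> j - (\<Sum>k\<in>UNIV. p k * \<sigma> k)) * inner (x j) w)
      \<le> G * exp (2 * G) * (1 - (norm (centroid x))\<^sup>2) * norm (e i)
        + 2 * G * (\<Sum>j\<in>UNIV. p j * norm (e j))"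
    using keys queries by (simp add: sum_distrib_left mult_ac)
  then show ?thesis
    using transport unfolding sum.distrib by (simp add: algebra_simps)
qed

definition attention_pairing ::
    "real^'d^'d \<Rightarrow> ('n::finite \<Rightarrow> real^'d) \<Rightarrow> ('n \<Rightarrow> real^'d) \<Rightarrow> real" where
  "attention_pairing W x w = (\<Sum>i\<in>UNIV. \<Sum>j\<in>UNIV. attention W x i j * inner (x j) (w i))"

definition attention_pairing_deriv ::
    "real^'d^'d \<Rightarrow> ('n::finite \<Rightarrow> real^'d) \<Rightarrow> ('n \<Rightarrow> real^'d) \<Rightarrow> ('n \<Rightarrow> real^'d) \<Rightarrow> real" where
  "attention_pairing_deriv W x e w = (\<Sum>i\<in>UNIV. \<Sum>j\<in>UNIV.
      attention W x i j * inner (e j) (w i)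
    + attention W x i j * (score_deriv W x e i j - (\<Sum>k\<in>UNIV. attention W x i k * score_deriv W x e i k))
      * inner (x j) (w i))"

lemma has_real_derivative_score:
  fixes a e :: "'n \<Rightarrow> real^'d" and W :: "real^'d^'d"
  shows "((\<lambda>s. inner (a i + s *\<^sub>R e i) (W *v (a j + s *\<^sub>R e j))) has_real_derivative
    score_deriv W (\<lambda>j. a j + t *\<^sub>R e j) e i j) (at t)"
proof -
  have "(\<lambda>s. inner (a i + s *\<^sub>R e i) (W *v (a j + s *\<^sub>R e j)))
      = (\<lambda>s. inner (a i) (W *v a j) + s * inner (e i) (W *v a j) + s * inner (a i) (W *v e j)
          + s * s * inner (e i) (W *v e j))"
    by (simp add: matrix_vector_right_distrib matrix_vector_mult_scaleR inner_add_left
        inner_add_right algebra_simps)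
  moreover have "((\<lambda>s. inner (a i) (W *v a j) + s * inner (e i) (W *v a j) + s * inner (a i) (W *v e j)
          + s * s * inner (e i) (W *v e j)) has_real_derivative
      inner (e i) (W *v a j) + inner (a i) (W *v e j) + 2 * t * inner (e i) (W *v e j)) (at t)"
    by (auto intro!: derivative_eq_intros)
  moreover have "inner (e i) (W *v a j) + inner (a i) (W *v e j) + 2 * t * inner (e i) (W *v e j)
      = score_deriv W (\<lambda>j. a j + t *\<^sub>R e j) e i j"
    by (simp add: score_deriv_def matrix_vector_right_distrib matrix_vector_mult_scaleR
        inner_add_left inner_add_right algebra_simps)
  ultimately show ?thesis
    by simp
qed

lemma has_real_derivative_attention_pairing:
  fixes a e w :: "'n::finite \<Rightarrow> real^'d" and W :: "real^'d^'d"
  shows "((\<lambda>s. attention_pairing W (\<lambda>j. a j + s *\<^sub>R e j) w) has_real_derivative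
    attention_pairing_deriv W (\<lambda>j. a j + t *\<^sub>R e j) e w) (at t)"
  unfolding attention_pairing_def attention_pairing_deriv_def attention_def
  by (intro DERIV_sum has_real_derivative_softmax_weighted_sum has_real_derivative_score)
    (auto intro!: derivative_eq_intros simp: inner_add_left)

lemma attention_pairing_deriv_le:
  fixes x e w :: "'n::finite \<Rightarrow> real^'d" and W :: "real^'d^'d"
  assumes x: "\<And>j. norm (x j) \<le> 1" and w: "\<And>i. norm (w i) \<le> 1" and W: "spec_norm W \<le> G"
  shows "attention_pairing_deriv W x e w \<le> (1 + 2 * G) * exp (2 * G) * (\<Sum>j\<in>UNIV. norm (e j))"
proof -
  define K where "K = G * exp (2 * G) * (1 - (norm (centroid x))\<^sup>2)"
  have "attention_pairing_deriv W x e w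
      \<le> (\<Sum>i\<in>UNIV. (1 + 2 * G) * (\<Sum>j\<in>UNIV. attention W x i j * norm (e j)) + K * norm (e i))"
    unfolding attention_pairing_deriv_def K_def
    by (intro sum_mono attention_row_deriv_le[where x = x and W = W, OF x w W])
  also have "\<dots> = (1 + 2 * G) * (\<Sum>i\<in>UNIV. \<Sum>j\<in>UNIV. attention W x i j * norm (e j))
      + K * (\<Sum>i\<in>UNIV. norm (e i))"
    by (simp add: sum.distrib sum_distrib_left)
  also have "(\<Sum>i\<in>UNIV. \<Sum>j\<in>UNIV. attention W x i j * norm (e j))
      = (\<Sum>j\<in>UNIV. \<Sum>i\<in>UNIV. attention W x i j * norm (e j))"
    by (rule sum.swap)
  also have "(1 + 2 * G) * (\<Sum>j\<in>UNIV. \<Sum>i\<in>UNIV. attention W x i j * norm (e j))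
      + K * (\<Sum>i\<in>UNIV. norm (e i))
      = (\<Sum>j\<in>UNIV. norm (e j) * ((1 + 2 * G) * (\<Sum>i\<in>UNIV. attention W x i j) + K))"
    by (simp add: sum.distrib sum_distrib_left sum_distrib_right algebra_simps)
  also have "\<dots> \<le> (\<Sum>j\<in>UNIV. norm (e j) * ((1 + 2 * G) * exp (2 * G)))"
    unfolding K_def using attention_column_bound[OF x W]
    by (intro sum_mono mult_left_mono) auto
  also have "\<dots> = (1 + 2 * G) * exp (2 * G) * (\<Sum>j\<in>UNIV. norm (e j))"
    by (simp add: sum_distrib_left sum_distrib_right mult.commute)
  finally show ?thesis .
qed

lemma inner_sgn_self: "inner v (sgn v) = norm (v::'a::real_inner)"
  by (cases "v = 0") (simp_all add: sgn_div_norm power2_eq_square flip: power2_norm_eq_inner)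

lemma norm_21_self_attention_diff_le:
  fixes X Y :: "real^'d^'n" and W :: "real^'d^'d"
  assumes X: "\<And>j. norm (X $ j) \<le> 1" and Y: "\<And>j. norm (Y $ j) \<le> 1" and W: "spec_norm W \<le> G"
  shows "norm_21 (self_attention W X - self_attention W Y)
    \<le> (1 + 2 * G) * exp (2 * G) * norm_21 (X - Y)"
proof -
  define e where "e j = Y $ j - X $ j" for j
  define w where "w i = sgn (self_attention W Y $ i - self_attention W X $ i)" for i
  define h where "h s = attention_pairing W (\<lambda>j. X $ j + s *\<^sub>R e j) w" for s
  have h: "h s = (\<Sum>i\<in>UNIV. inner (self_attention W M $ i) (w i))"
    if "(\<lambda>j. X $ j + s *\<^sub>R e j) = vec_nth M" for s M
    unfolding h_def that by (simp add: attention_pairing_def self_attention_row inner_sum_left)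
  have "norm_21 (self_attention W X - self_attention W Y) = h 1 - h 0"
    using h[of 1 Y] h[of 0 X]
    by (simp add: norm_21_def e_def w_def fun_eq_iff inner_sgn_self norm_minus_commute
        flip: sum_subtractf inner_diff_left)
  moreover obtain z where z: "0 < z" "z < 1"
    and "h 1 - h 0 = attention_pairing_deriv W (\<lambda>j. X $ j + z *\<^sub>R e j) e w"
    using MVT2[of 0 1 h] has_real_derivative_attention_pairing unfolding h_def by force
  moreover have "norm (X $ j + z *\<^sub>R e j) \<le> 1" for j
  proof -
    have "norm (X $ j + z *\<^sub>R e j) = norm ((1 - z) *\<^sub>R X $ j + z *\<^sub>R Y $ j)"
      by (simp add: e_def algebra_simps)
    also have "\<dots> \<le> (1 - z) * norm (X $ j) + z * norm (Y $ j)"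
      using z norm_triangle_ineq[of "(1 - z) *\<^sub>R X $ j" "z *\<^sub>R Y $ j"] by simp
    also have "\<dots> \<le> 1"
      using X[of j] Y[of j] z by (intro convex_bound_le) auto
    finally show ?thesis .
  qed
  moreover have "norm (w i) \<le> 1" for i
    by (simp add: w_def norm_sgn)
  ultimately show ?thesis
    using attention_pairing_deriv_le[OF _ _ W, of "\<lambda>j. X $ j + z *\<^sub>R e j" w e]
    by (simp add: norm_21_def e_def norm_minus_commute)
qed

theorem lemma2:
  fixes X E :: "real^'d^'n" and V W :: "real^'d^'d" and \<Gamma> :: real
  assumes "norm_2inf X \<le> 1"
    and "norm_2inf (X + E) \<le> 1"
    and "spec_norm V \<le> 1"
    and "spec_norm W \<le> \<Gamma>"
  shows "norm_2inf (softmax (X ** W ** transpose X) ** X ** V) \<le> 1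
       \<and> norm_2inf (softmax ((X + E) ** W ** transpose (X + E)) ** (X + E) ** V) \<le> 1
       \<and> norm_21 (softmax (X ** W ** transpose X) ** X ** V
                   - softmax ((X + E) ** W ** transpose (X + E)) ** (X + E) ** V)
           \<le> (2 * \<Gamma> + 1) * exp (2 * \<Gamma>) * norm_21 E"
proof -
  have X: "\<And>j. norm (X $ j) \<le> 1" and XE: "\<And>j. norm ((X + E) $ j) \<le> 1"
    using assms(1,2) by (simp_all add: norm_2inf_le_iff)
  have rows: "norm_2inf (self_attention W M ** V) \<le> 1" if "\<And>j. norm (M $ j) \<le> 1" for M :: "real^'d^'n"
    unfolding norm_2inf_le_iff matrix_mult_row
    using norm_vector_matrix_mult_le[OF assms(3)] norm_self_attention_row_le[OF that]
    by (metis mult_1 order_trans)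
  have "norm_21 (self_attention W X ** V - self_attention W (X + E) ** V)
      \<le> norm_21 (self_attention W X - self_attention W (X + E))"
    using norm_21_matrix_mult_le[OF assms(3)] by (simp flip: matrix_diff_rdistrib)
  also have "\<dots> \<le> (1 + 2 * \<Gamma>) * exp (2 * \<Gamma>) * norm_21 (X - (X + E))"
    by (rule norm_21_self_attention_diff_le[OF X XE assms(4)])
  finally show ?thesis
    using rows[OF X] rows[OF XE] by (simp add: self_attention_def norm_21_def add.commute)
qed

end
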